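(* If $A\subseteq\mathbb{N}$ is pseudorandom, then there are infinite sets $B,C\subseteq\mathbb{N}$ such that $B+C\subseteq A$.
   Context: $\mathbb{N}=\{1,2,3,\dots\}$, $[1,n]=\{1,\dots,n\}$, $B+C=\{b+c:b\in B,c\in C\}$, $A-i=\{a-i:a\in A\}$. The upper density of $A\subseteq\mathbb{N}$ is $\overline{d}(A)=\limsup_{n\to\infty}\frac{|A\cap[1,n]|}{n}$. Work in a countably saturated nonstandard universe; ${}^*X$ denotes the nonstandard extension of $X$ and $\operatorname{st}$ the standard part. For hyperfinite $N\in{}^*\mathbb{N}\setminus\mathbb{N}$ and $X\subseteq\mathbb{N}$ write $X_N={}^*X\cap[1,N]$; the Loeb measure $\mu_N$ on $[1,N]$ is the countably additive extension of $\mu_N(Y)=\operatorname{st}(|Y|/N)$ for internal $Y\subseteq[1,N]$. Definition: $A\subseteq\mathbb{N}$ with $\overline{d}(A)=\alpha>0$ is pseudorandom if there is $N\in{}^*\mathbb{N}\setminus\mathbb{N}$ with $\mu_N(A_N)=\alpha$ such that $\chi_{A_N}-\alpha$ is weakly mixing for the unitary operator $U_T f=f\circ T$ on $L^2(\mu_N)$, where $T(x)=x+1\pmod N$ on $[1,N]$; here $x$ in a Hilbert space is weakly mixing for a unitary $U$ if $\lim_{n\to\infty}\frac1n\sum_{i=1}^n|\langle U^ix,x\rangle|=0$. Equivalently, there is such $N$ with $\lim_{n\to\infty}\frac1n\sum_{i=1}^n|\mu_N(A_N\cap(A-i)_N)-\alpha^2|=0$. *)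

theory Defs
  imports "HOL-Analysis.Analysis" "HOL-Library.Liminf_Limsup"
begin

text \<open>Natural numbers in the paper are positive: the paper's \<open>\<nat>\<close> is \<open>{1..}\<close>.\<close>

definition upper_density :: "nat set \<Rightarrow> ereal" where
  "upper_density A = limsup (\<lambda>n. ereal (real (card (A \<inter> {1..n})) / real n))"

definition free_ultrafilter :: "nat filter \<Rightarrow> bool" where
  "free_ultrafilter U \<longleftrightarrow> U \<noteq> bot \<and> U \<le> cofinite \<and>
     (\<forall>P. eventually P U \<or> eventually (\<lambda>x. \<not> P x) U)"

text \<open>Nonstandard setting realised as the ultrapower by a free ultrafilter \<open>U\<close> on \<open>\<nat>\<close>
  (a countably saturated universe).  A hyperfinite \<open>N = [Nk]_U\<close> is infinite iff
  \<open>Nk \<rightarrow> \<infinity>\<close> along \<open>U\<close>.  For an internal set \<open>Y = [Yk]_U \<subseteq> [1,N]\<close>, the Loeb measure is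
  \<open>\<mu>_N(Y) = st(|Y|/N)\<close>, i.e. the \<open>U\<close>-limit of \<open>|Yk|/Nk\<close>.  Here
  \<open>A_N \<inter> (A-i)_N = {x \<in> [1,N]. x \<in> *A \<and> x+i \<in> *A}\<close>.\<close>

definition loeb_measure_std :: "nat filter \<Rightarrow> (nat \<Rightarrow> nat) \<Rightarrow> nat set \<Rightarrow> real \<Rightarrow> bool" where
  "loeb_measure_std U Nk Y m \<longleftrightarrow>
     ((\<lambda>k. real (card (Y \<inter> {1..Nk k})) / real (Nk k)) \<longlongrightarrow> m) U"

definition pseudorandom :: "nat set \<Rightarrow> bool" where
  "pseudorandom A \<longleftrightarrow> (\<exists>\<alpha>::real. \<alpha> > 0 \<and> upper_density A = ereal \<alpha> \<and>
     (\<exists>U Nk c. free_ultrafilter U \<and> filterlim Nk at_top U \<and>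
        loeb_measure_std U Nk A \<alpha> \<and>
        (\<forall>i\<ge>1. loeb_measure_std U Nk {x \<in> A. x + i \<in> A} (c i)) \<and>
        (\<lambda>n. (\<Sum>i=1..n. \<bar>c i - \<alpha>\<^sup>2\<bar>) / real n) \<longlonglongrightarrow> 0))"

end

theory Submission
  imports Defs
begin

text \<open>
  Write mean f for the U-limit of the averages of f over [1, N_k], let a = 1_A - \<alpha>, and for
  a set Y of mean \<gamma> > 0 let \<lambda>_i = mean (1_Y a(x + i)). The sum of the \<lambda>_i^2 over i \<le> n is the
  mean of 1_Y h with h = \<Sum>_i \<lambda>_i a(x + i), so by Cauchy--Schwarz it is at most the square
  root of mean (h^2) \<le> 2n \<Sum>_(d \<le> n) |mean (a(x) a(x + d))|. Since mean (a(x) a(x + d)) = c_d - \<alpha>^2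
  for d \<ge> 1, pseudorandomness makes this o(n^2), so \<lambda>_i > -\<alpha>\<gamma>/2 outside a set of density
  zero. For those i the set Y \<inter> (A - i) has mean \<lambda>_i + \<alpha>\<gamma> > 0; hence every set X of positive
  mean contains such an i beyond any given bound. Alternating this choice between two
  shrinking sets of positive mean gives b_0 < c_0 < b_1 < c_1 < ... with all b_i + c_j \<in> A.
  Neither A \<subseteq> {1..} nor the value of the upper density is needed.
\<close>

lemma free_ultrafilter_bounded_tendsto:
  fixes s :: "nat \<Rightarrow> real"
  assumes free: "free_ultrafilter U" and bounded: "\<And>k. \<bar>s k\<bar> \<le> M"
  shows "\<exists>L. (s \<longlongrightarrow> L) U"
proof -
  have "filtermap s U \<noteq> bot"
    using free by (simp add: free_ultrafilter_def filtermap_bot_iff)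
  moreover have "eventually (\<lambda>x. x \<in> {-M..M}) (filtermap s U)"
    unfolding eventually_filtermap
    by (intro always_eventually allI) (meson bounded abs_le_iff atLeastAtMost_iff minus_le_iff)
  ultimately obtain L where L: "inf (nhds L) (filtermap s U) \<noteq> bot"
    using compact_Icc[of "-M" M, unfolded compact_filter] by blast
  have "(s \<longlongrightarrow> L) U"
  proof (rule topological_tendstoI)
    fix V assume "open V" "L \<in> V"
    then have near: "eventually (\<lambda>x. x \<in> V) (nhds L)"
      using eventually_nhds by blast
    show "eventually (\<lambda>k. s k \<in> V) U"
    proof (rule ccontr)
      assume "\<not> eventually (\<lambda>k. s k \<in> V) U"
      then have "eventually (\<lambda>x. x \<notin> V) (filtermap s U)"
        using free unfolding free_ultrafilter_def eventually_filtermap by blast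
      with near have "eventually (\<lambda>x. False) (inf (nhds L) (filtermap s U))"
        unfolding eventually_inf by blast
      with L show False by (simp add: eventually_False)
    qed
  qed
  then show ?thesis by blast
qed

lemma sum_shift_diff_le:
  fixes f :: "nat \<Rightarrow> real"
  assumes "\<And>x. \<bar>f x\<bar> \<le> M"
  shows "\<bar>(\<Sum>x=1..N. f (x + j)) - (\<Sum>x=1..N. f x)\<bar> \<le> 2 * real j * M"
proof (induction j)
  case 0
  show ?case by simp
next
  case (Suc j)
  have "(\<Sum>x=1..N. f (x + Suc j)) - (\<Sum>x=1..N. f (x + j)) = f (Suc N + j) - f (1 + j)"
    using sum_Suc_diff[of 1 N "\<lambda>x. f (x + j)"] by (simp add: sum_subtractf)
  then have "\<bar>(\<Sum>x=1..N. f (x + Suc j)) - (\<Sum>x=1..N. f (x + j))\<bar> \<le> 2 * M"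
    using assms[of "Suc N + j"] assms[of "1 + j"] by linarith
  with Suc.IH show ?case by (simp add: algebra_simps)
qed

lemma sum_reindex_le:
  fixes f :: "'a \<Rightarrow> 'b::ordered_comm_monoid_add"
  assumes "inj_on \<phi> S" "\<phi> ` S \<subseteq> T" "finite T" "\<And>d. 0 \<le> f d"
  shows "(\<Sum>j\<in>S. f (\<phi> j)) \<le> (\<Sum>d\<in>T. f d)"
proof -
  have "(\<Sum>j\<in>S. f (\<phi> j)) = (\<Sum>d\<in>\<phi> ` S. f d)"
    using sum.reindex[OF assms(1), of f] by simp
  also have "\<dots> \<le> (\<Sum>d\<in>T. f d)"
    using assms(2-4) by (intro sum_mono2) auto
  finally show ?thesis .
qed

lemma sum_sum_dist_le:
  fixes f :: "nat \<Rightarrow> real"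
  assumes nonneg: "\<And>d. 0 \<le> f d"
  shows "(\<Sum>i=1..n. \<Sum>j=1..n. f (max i j - min i j)) \<le> 2 * real n * (\<Sum>d=0..n. f d)"
proof -
  have "(\<Sum>j=1..n. f (max i j - min i j)) \<le> 2 * (\<Sum>d=0..n. f d)" if "i \<in> {1..n}" for i
  proof -
    have "(\<Sum>j=1..n. f (max i j - min i j))
        = (\<Sum>j\<in>{1..n} \<inter> {..i}. f (i - j)) + (\<Sum>j\<in>{1..n} - {..i}. f (j - i))"
      by (subst sum.Int_Diff[of _ _ "{..i}"]) (auto intro!: arg_cong2[where f="(+)"] sum.cong)
    also have "\<dots> \<le> (\<Sum>d=0..n. f d) + (\<Sum>d=0..n. f d)"
      using that by (intro add_mono sum_reindex_le[OF _ _ _ nonneg]) (auto simp: inj_on_def)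
    finally show ?thesis by simp
  qed
  then have "(\<Sum>i=1..n. \<Sum>j=1..n. f (max i j - min i j)) \<le> (\<Sum>i=1..n. 2 * (\<Sum>d=0..n. f d))"
    by (intro sum_mono)
  then show ?thesis by simp
qed

lemma mult_le_amgm:
  fixes g h t :: real
  assumes "0 \<le> g" "g \<le> 1" "0 < t"
  shows "g * h \<le> t / 2 + h\<^sup>2 / (2 * t)"
proof -
  have "t / 2 + h\<^sup>2 / (2 * t) - h = (t - h)\<^sup>2 / (2 * t)"
    using \<open>0 < t\<close> by (simp add: field_simps power2_eq_square)
  moreover have "0 \<le> (t - h)\<^sup>2 / (2 * t)" and "0 \<le> t / 2 + h\<^sup>2 / (2 * t)"
    using \<open>0 < t\<close> by simp_all
  ultimately have "max 0 h \<le> t / 2 + h\<^sup>2 / (2 * t)"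
    by linarith
  moreover have "g * h \<le> max 0 h"
    using assms(1,2) by (cases "0 \<le> h") (auto simp: mult_left_le_one_le mult_nonneg_nonpos)
  ultimately show ?thesis by linarith
qed

lemma le_sqrt_if_le_amgm:
  fixes s q :: real
  assumes "0 \<le> q" and amgm: "\<And>t. 0 < t \<Longrightarrow> s \<le> t / 2 + q / (2 * t)"
  shows "s \<le> sqrt q"
proof (cases "q = 0")
  case True
  show ?thesis
  proof (rule field_le_epsilon)
    fix e :: real assume "0 < e"
    then show "s \<le> sqrt q + e" using amgm[of "2 * e"] True by simp
  qed
next
  case False
  with \<open>0 \<le> q\<close> have "0 < sqrt q" by simp
  moreover have "sqrt q * sqrt q = q"
    using \<open>0 \<le> q\<close> by simp
  then have "q / (2 * sqrt q) = sqrt q / 2"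
    using \<open>0 < sqrt q\<close> by (simp add: field_simps)
  ultimately show ?thesis using amgm[of "sqrt q"] by simp
qed

lemma density_zero_finite:
  assumes "finite S"
  shows "(\<lambda>n. real (card (S \<inter> {1..n})) / real n) \<longlonglongrightarrow> 0"
proof (rule tendsto_sandwich[of "\<lambda>n. 0" _ _ "\<lambda>n. real (card S) / real n"])
  show "\<forall>\<^sub>F n in sequentially. real (card (S \<inter> {1..n})) / real n \<le> real (card S) / real n"
    using assms by (intro always_eventually allI divide_right_mono) (simp_all add: card_mono)
qed (simp_all add: lim_const_over_n)

section \<open>Means along an ultrafilter\<close>

locale ultra_mean =
  fixes U :: "nat filter" and N :: "nat \<Rightarrow> nat"
  assumes free: "free_ultrafilter U" and N_to_top: "filterlim N at_top U"
begin

definition avg :: "(nat \<Rightarrow> real) \<Rightarrow> nat \<Rightarrow> real" where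
  "avg f k = (\<Sum>x=1..N k. f x) / real (N k)"

definition has_mean :: "(nat \<Rightarrow> real) \<Rightarrow> real \<Rightarrow> bool" where
  "has_mean f L \<longleftrightarrow> (avg f \<longlongrightarrow> L) U"

definition mean :: "(nat \<Rightarrow> real) \<Rightarrow> real" where
  "mean f = Lim U (avg f)"

lemma nontrivial: "\<not> trivial_limit U"
  using free by (simp add: free_ultrafilter_def trivial_limit_def)

lemma avg_abs_le:
  assumes "\<And>x. \<bar>f x\<bar> \<le> M"
  shows "\<bar>avg f k\<bar> \<le> M"
proof (cases "N k = 0")
  case True
  then show ?thesis using assms[of 0] by (simp add: avg_def)
next
  case False
  have "\<bar>\<Sum>x=1..N k. f x\<bar> \<le> (\<Sum>x=1..N k. M)"
    using assms by (intro order.trans[OF sum_abs sum_mono])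
  then show ?thesis
    using False by (simp add: avg_def abs_divide divide_le_eq mult.commute)
qed

lemma has_mean_mean:
  assumes "\<And>x. \<bar>f x\<bar> \<le> M"
  shows "has_mean f (mean f)"
proof -
  have "\<And>k. \<bar>avg f k\<bar> \<le> M"
    by (rule avg_abs_le[OF assms])
  then obtain L where "(avg f \<longlongrightarrow> L) U"
    using free_ultrafilter_bounded_tendsto[OF free] by blast
  with nontrivial show ?thesis
    unfolding has_mean_def mean_def by (simp add: tendsto_Lim)
qed

lemma mean_eqI: "has_mean f L \<Longrightarrow> mean f = L"
  using nontrivial by (simp add: has_mean_def mean_def tendsto_Lim)

lemma has_mean_mono:
  assumes "has_mean f L" "has_mean g M" "\<And>x. f x \<le> g x"
  shows "L \<le> M"
proof -
  have "avg f k \<le> avg g k" for k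
    unfolding avg_def by (intro divide_right_mono sum_mono assms(3)) simp
  then show ?thesis
    using assms(1,2) nontrivial unfolding has_mean_def by (intro tendsto_le) auto
qed

lemma has_mean_const: "has_mean (\<lambda>x. a) a"
proof -
  have "eventually (\<lambda>k. N k \<ge> 1) U"
    using N_to_top by (simp add: filterlim_at_top)
  then have "eventually (\<lambda>k. avg (\<lambda>x. a) k = a) U"
    by eventually_elim (simp add: avg_def)
  then show ?thesis unfolding has_mean_def by (rule tendsto_eventually)
qed

lemma has_mean_abs_le:
  assumes "has_mean f L" "\<And>x. \<bar>f x\<bar> \<le> M"
  shows "\<bar>L\<bar> \<le> M"
proof -
  have "-M \<le> L"
    by (rule has_mean_mono[OF has_mean_const assms(1)]) (meson assms(2) abs_le_iff minus_le_iff)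
  moreover have "L \<le> M"
    by (rule has_mean_mono[OF assms(1) has_mean_const]) (meson assms(2) abs_le_iff)
  ultimately show ?thesis by simp
qed

lemma has_mean_add: "has_mean f L \<Longrightarrow> has_mean g M \<Longrightarrow> has_mean (\<lambda>x. f x + g x) (L + M)"
  unfolding has_mean_def avg_def by (simp add: sum.distrib add_divide_distrib tendsto_add)

lemma has_mean_cmult:
  assumes "has_mean f L"
  shows "has_mean (\<lambda>x. a * f x) (a * L)"
proof -
  have "avg (\<lambda>x. a * f x) = (\<lambda>k. a * avg f k)"
    by (simp add: avg_def sum_distrib_left fun_eq_iff)
  with assms show ?thesis
    unfolding has_mean_def by (simp add: tendsto_mult_left)
qed

lemma has_mean_sum:
  "finite I \<Longrightarrow> (\<And>i. i \<in> I \<Longrightarrow> has_mean (f i) (L i)) \<Longrightarrow>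
     has_mean (\<lambda>x. \<Sum>i\<in>I. f i x) (\<Sum>i\<in>I. L i)"
  by (induction I rule: finite_induct) (auto intro: has_mean_add has_mean_const)

lemma has_mean_shift:
  assumes "\<And>x. \<bar>f x\<bar> \<le> M" "has_mean f L"
  shows "has_mean (\<lambda>x. f (x + j)) L"
proof -
  have bound_to_0: "((\<lambda>k. 2 * real j * M / real (N k)) \<longlongrightarrow> 0) U"
    using filterlim_compose[OF filterlim_real_sequentially N_to_top]
    by (intro tendsto_divide_0[OF tendsto_const] filterlim_at_top_imp_at_infinity) (simp add: o_def)
  have bound: "norm (avg (\<lambda>x. f (x + j)) k - avg f k) \<le> 2 * real j * M / real (N k)" for k
  proof -
    have "\<bar>(\<Sum>x=1..N k. f (x + j)) - (\<Sum>x=1..N k. f x)\<bar> \<le> 2 * real j * M"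
      by (rule sum_shift_diff_le) (rule assms(1))
    then have "\<bar>(\<Sum>x=1..N k. f (x + j)) - (\<Sum>x=1..N k. f x)\<bar> / real (N k)
        \<le> 2 * real j * M / real (N k)"
      by (rule divide_right_mono) simp
    then show ?thesis
      unfolding avg_def real_norm_def diff_divide_distrib[symmetric] abs_divide by simp
  qed
  have "((\<lambda>k. avg (\<lambda>x. f (x + j)) k - avg f k) \<longlongrightarrow> 0) U"
    using bound by (intro Lim_null_comparison[OF always_eventually bound_to_0]) blast
  from tendsto_add[OF this assms(2)[unfolded has_mean_def]] show ?thesis
    unfolding has_mean_def by simp
qed

lemma avg_indicator: "avg (indicator S) k = real (card (S \<inter> {1..N k})) / real (N k)"
  unfolding avg_def using sum.inter_restrict[of "{1..N k}" "\<lambda>_. 1::real" S]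
  by (simp add: indicator_def Int_commute)

lemma has_mean_indicator_iff: "has_mean (indicator S) m \<longleftrightarrow> loeb_measure_std U N S m"
  unfolding has_mean_def loeb_measure_std_def avg_indicator ..

lemma has_mean_indicator_density_zero:
  assumes "(\<lambda>n. real (card (S \<inter> {1..n})) / real n) \<longlonglongrightarrow> 0"
  shows "has_mean (indicator S) 0"
  using filterlim_compose[OF assms N_to_top]
  unfolding has_mean_def avg_indicator by (simp add: o_def)

end

section \<open>Correlations of a pseudorandom set\<close>

locale pseudorandom_set = ultra_mean +
  fixes A :: "nat set" and \<alpha> :: real and c :: "nat \<Rightarrow> real"
  assumes alpha_pos: "0 < \<alpha>"
    and loeb_A: "loeb_measure_std U N A \<alpha>"
    and loeb_A_shift: "\<And>i. 1 \<le> i \<Longrightarrow> loeb_measure_std U N {x \<in> A. x + i \<in> A} (c i)"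
    and cesaro_c: "(\<lambda>n. (\<Sum>i=1..n. \<bar>c i - \<alpha>\<^sup>2\<bar>) / real n) \<longlonglongrightarrow> 0"
begin

lemma has_mean_A: "has_mean (indicator A) \<alpha>"
  using loeb_A by (simp add: has_mean_indicator_iff)

lemma has_mean_A_shift:
  assumes "1 \<le> i"
  shows "has_mean (\<lambda>x. indicator A x * indicator A (x + i)) (c i)"
proof -
  have "indicator {x \<in> A. x + i \<in> A} = (\<lambda>x. indicator A x * indicator A (x + i) :: real)"
    by (simp add: indicator_def fun_eq_iff)
  with loeb_A_shift[OF assms] show ?thesis
    by (simp add: flip: has_mean_indicator_iff)
qed

lemma alpha_le_1: "\<alpha> \<le> 1"
  using has_mean_abs_le[OF has_mean_A indicator_abs_le_1] by simp

definition bal :: "nat \<Rightarrow> real" where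
  "bal x = indicator A x - \<alpha>"

lemma bal_abs_le: "\<bar>bal x\<bar> \<le> 1"
  using alpha_pos alpha_le_1 by (auto simp: bal_def indicator_def)

lemma bal_mult_abs_le: "\<bar>bal x * bal y\<bar> \<le> 1"
  unfolding abs_mult using bal_abs_le[of x] bal_abs_le[of y] by (simp add: mult_le_one)

definition autocorr :: "nat \<Rightarrow> real" where
  "autocorr d = mean (\<lambda>x. bal x * bal (x + d))"

lemma has_mean_autocorr: "has_mean (\<lambda>x. bal x * bal (x + d)) (autocorr d)"
  unfolding autocorr_def by (rule has_mean_mean[OF bal_mult_abs_le])

lemma autocorr_eq:
  assumes "1 \<le> d"
  shows "autocorr d = c d - \<alpha>\<^sup>2"
proof -
  have "(\<lambda>x. bal x * bal (x + d)) = (\<lambda>x. (indicator A x * indicator A (x + d)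
      + (- \<alpha>) * indicator A (x + d)) + ((- \<alpha>) * indicator A x + \<alpha>\<^sup>2))"
    by (simp add: bal_def algebra_simps power2_eq_square fun_eq_iff)
  moreover have "has_mean (\<lambda>x. indicator A (x + d)) \<alpha>"
    by (rule has_mean_shift[OF indicator_abs_le_1 has_mean_A])
  ultimately have "has_mean (\<lambda>x. bal x * bal (x + d))
      ((c d + (- \<alpha>) * \<alpha>) + ((- \<alpha>) * \<alpha> + \<alpha>\<^sup>2))"
    by (simp only:)
      (intro has_mean_add has_mean_cmult has_mean_A_shift[OF assms] has_mean_A has_mean_const)
  then show ?thesis
    unfolding autocorr_def by (simp add: mean_eqI power2_eq_square)
qed

lemma has_mean_bal_pair:
  "has_mean (\<lambda>x. bal (x + i) * bal (x + j)) (autocorr (max i j - min i j))"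
proof -
  have "has_mean (\<lambda>x. bal (x + min i j) * bal (x + min i j + (max i j - min i j)))
      (autocorr (max i j - min i j))"
    by (rule has_mean_shift[OF bal_mult_abs_le has_mean_autocorr])
  moreover have "x + min i j + (max i j - min i j) = x + max i j" for x
    by simp
  ultimately show ?thesis
    by (cases "i \<le> j") (simp_all add: mult.commute max_def min_def)
qed

lemma autocorr_cesaro: "(\<lambda>n. (\<Sum>d=0..n. \<bar>autocorr d\<bar>) / real n) \<longlonglongrightarrow> 0"
proof -
  have "(\<Sum>d=0..n. \<bar>autocorr d\<bar>) / real n
      = \<bar>autocorr 0\<bar> / real n + (\<Sum>i=1..n. \<bar>c i - \<alpha>\<^sup>2\<bar>) / real n" for n
    by (simp add: sum.atLeast_Suc_atMost autocorr_eq add_divide_distrib)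
  moreover have
    "(\<lambda>n. \<bar>autocorr 0\<bar> / real n + (\<Sum>i=1..n. \<bar>c i - \<alpha>\<^sup>2\<bar>) / real n) \<longlonglongrightarrow> 0 + 0"
    by (intro tendsto_add lim_const_over_n cesaro_c)
  ultimately show ?thesis by simp
qed

definition set_corr :: "nat set \<Rightarrow> nat \<Rightarrow> real" where
  "set_corr Y i = mean (\<lambda>x. indicator Y x * bal (x + i))"

lemma indicator_bal_abs_le: "\<bar>indicator Y x * bal y\<bar> \<le> 1"
  using bal_abs_le[of y] by (simp add: abs_mult indicator_def)

lemma has_mean_set_corr: "has_mean (\<lambda>x. indicator Y x * bal (x + i)) (set_corr Y i)"
  unfolding set_corr_def by (rule has_mean_mean[OF indicator_bal_abs_le])

lemma set_corr_abs_le: "\<bar>set_corr Y i\<bar> \<le> 1"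
  by (rule has_mean_abs_le[OF has_mean_set_corr indicator_bal_abs_le])

lemma has_mean_shift_inter:
  assumes "has_mean (indicator Y) \<gamma>"
  shows "has_mean (indicator (Y \<inter> {y. y + i \<in> A})) (set_corr Y i + \<alpha> * \<gamma>)"
proof -
  have "indicator (Y \<inter> {y. y + i \<in> A})
      = (\<lambda>x. indicator Y x * bal (x + i) + \<alpha> * indicator Y x :: real)"
    by (simp add: bal_def indicator_def fun_eq_iff)
  then show ?thesis by (simp add: has_mean_add has_mean_set_corr has_mean_cmult assms)
qed

lemma has_mean_bal_combination_sq:
  "has_mean (\<lambda>x. (\<Sum>i=1..n. w i * bal (x + i))\<^sup>2)
     (\<Sum>i=1..n. \<Sum>j=1..n. w i * w j * autocorr (max i j - min i j))"
proof -
  have "(\<lambda>x. (\<Sum>i=1..n. w i * bal (x + i))\<^sup>2)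
      = (\<lambda>x. \<Sum>i=1..n. \<Sum>j=1..n. (w i * w j) * (bal (x + i) * bal (x + j)))"
    by (simp add: power2_eq_square sum_product mult_ac)
  then show ?thesis
    by (simp only:) (intro has_mean_sum has_mean_cmult has_mean_bal_pair, simp_all)
qed

lemma autocorr_quadratic_form_le:
  assumes "\<And>i. \<bar>w i\<bar> \<le> 1"
  shows "(\<Sum>i=1..n. \<Sum>j=1..n. w i * w j * autocorr (max i j - min i j))
    \<le> 2 * real n * (\<Sum>d=0..n. \<bar>autocorr d\<bar>)"
proof -
  have "w i * w j * r \<le> \<bar>r\<bar>" for i j and r :: real
  proof -
    have "w i * w j * r \<le> \<bar>w i * w j\<bar> * \<bar>r\<bar>"
      by (metis abs_ge_self abs_mult)
    also have "\<dots> \<le> \<bar>r\<bar>"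
      using assms[of i] assms[of j]
      by (intro mult_left_le_one_le) (simp_all add: abs_mult mult_le_one)
    finally show ?thesis .
  qed
  then have "(\<Sum>i=1..n. \<Sum>j=1..n. w i * w j * autocorr (max i j - min i j))
      \<le> (\<Sum>i=1..n. \<Sum>j=1..n. \<bar>autocorr (max i j - min i j)\<bar>)"
    by (intro sum_mono)
  also have "\<dots> \<le> 2 * real n * (\<Sum>d=0..n. \<bar>autocorr d\<bar>)"
    by (rule sum_sum_dist_le) simp
  finally show ?thesis .
qed

lemma sum_set_corr_sq_le:
  "(\<Sum>i=1..n. (set_corr Y i)\<^sup>2) \<le> sqrt (2 * real n * (\<Sum>d=0..n. \<bar>autocorr d\<bar>))"
proof (rule le_sqrt_if_le_amgm)
  show "0 \<le> 2 * real n * (\<Sum>d=0..n. \<bar>autocorr d\<bar>)"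
    by (simp add: sum_nonneg)
  fix t :: real assume "0 < t"
  define h where "h x = (\<Sum>i=1..n. set_corr Y i * bal (x + i))" for x
  define Q where
    "Q = (\<Sum>i=1..n. \<Sum>j=1..n. set_corr Y i * set_corr Y j * autocorr (max i j - min i j))"
  have "(\<lambda>x. indicator Y x * h x)
      = (\<lambda>x. \<Sum>i=1..n. set_corr Y i * (indicator Y x * bal (x + i)))"
    by (simp add: h_def sum_distrib_left mult_ac)
  then have Yh: "has_mean (\<lambda>x. indicator Y x * h x) (\<Sum>i=1..n. (set_corr Y i)\<^sup>2)"
    unfolding power2_eq_square
    by (simp only:) (intro has_mean_sum has_mean_cmult has_mean_set_corr, simp)
  have "has_mean (\<lambda>x. (h x)\<^sup>2) Q"
    using has_mean_bal_combination_sq[where n = n and w = "set_corr Y"] unfolding h_def Q_def .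
  from has_mean_add[OF has_mean_const has_mean_cmult[OF this, of "1 / (2 * t)"], of "t / 2"]
  have amgm: "has_mean (\<lambda>x. t / 2 + (h x)\<^sup>2 / (2 * t)) (t / 2 + Q / (2 * t))"
    by simp
  \<comment> \<open>the pointwise AM-GM bound takes the place of Cauchy--Schwarz for the mean\<close>
  have "(\<Sum>i=1..n. (set_corr Y i)\<^sup>2) \<le> t / 2 + Q / (2 * t)"
    using \<open>0 < t\<close> by (intro has_mean_mono[OF Yh amgm] mult_le_amgm) simp_all
  moreover have "Q / (2 * t) \<le> 2 * real n * (\<Sum>d=0..n. \<bar>autocorr d\<bar>) / (2 * t)"
    unfolding Q_def using \<open>0 < t\<close>
    by (intro divide_right_mono autocorr_quadratic_form_le set_corr_abs_le) simp
  ultimately show "(\<Sum>i=1..n. (set_corr Y i)\<^sup>2)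
      \<le> t / 2 + 2 * real n * (\<Sum>d=0..n. \<bar>autocorr d\<bar>) / (2 * t)"
    by linarith
qed

lemma set_corr_cesaro: "(\<lambda>n. (\<Sum>i=1..n. (set_corr Y i)\<^sup>2) / real n) \<longlonglongrightarrow> 0"
proof (rule tendsto_sandwich[of "\<lambda>n. 0" _ _
    "\<lambda>n. sqrt (2 * ((\<Sum>d=0..n. \<bar>autocorr d\<bar>) / real n))"])
  show "\<forall>\<^sub>F n in sequentially. 0 \<le> (\<Sum>i=1..n. (set_corr Y i)\<^sup>2) / real n"
    by (simp add: sum_nonneg)
  have "(\<Sum>i=1..n. (set_corr Y i)\<^sup>2) / real n \<le> sqrt (2 * ((\<Sum>d=0..n. \<bar>autocorr d\<bar>) / real n))"
    if "0 < n" for n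
  proof -
    have "real n * sqrt (2 * ((\<Sum>d=0..n. \<bar>autocorr d\<bar>) / real n))
        = sqrt ((real n)\<^sup>2 * (2 * ((\<Sum>d=0..n. \<bar>autocorr d\<bar>) / real n)))"
      by (subst real_sqrt_mult) simp
    also have "\<dots> = sqrt (2 * real n * (\<Sum>d=0..n. \<bar>autocorr d\<bar>))"
      using that by (simp add: power2_eq_square)
    finally have "sqrt (2 * real n * (\<Sum>d=0..n. \<bar>autocorr d\<bar>))
        = real n * sqrt (2 * ((\<Sum>d=0..n. \<bar>autocorr d\<bar>) / real n))" ..
    with sum_set_corr_sq_le[of Y n] that show ?thesis
      by (simp add: divide_le_eq mult.commute)
  qed
  then show "\<forall>\<^sub>F n in sequentially. (\<Sum>i=1..n. (set_corr Y i)\<^sup>2) / real n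
      \<le> sqrt (2 * ((\<Sum>d=0..n. \<bar>autocorr d\<bar>) / real n))"
    by (intro eventually_sequentiallyI[of 1]) simp
  show "(\<lambda>n. sqrt (2 * ((\<Sum>d=0..n. \<bar>autocorr d\<bar>) / real n))) \<longlonglongrightarrow> 0"
    using tendsto_real_sqrt[OF tendsto_mult_left[OF autocorr_cesaro, of 2]] by simp
qed simp

lemma negative_set_corr_density_zero:
  assumes "0 < p"
  shows "(\<lambda>n. real (card ({i. set_corr Y i \<le> - p} \<inter> {1..n})) / real n) \<longlonglongrightarrow> 0"
proof (rule tendsto_sandwich[of "\<lambda>n. 0" _ _ "\<lambda>n. ((\<Sum>i=1..n. (set_corr Y i)\<^sup>2) / real n) / p\<^sup>2"])
  have card_bound: "real (card ({i. set_corr Y i \<le> - p} \<inter> {1..n})) * p\<^sup>2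
      \<le> (\<Sum>i=1..n. (set_corr Y i)\<^sup>2)" for n
  proof -
    have "real (card ({i. set_corr Y i \<le> - p} \<inter> {1..n})) * p\<^sup>2
        = (\<Sum>i\<in>{i. set_corr Y i \<le> - p} \<inter> {1..n}. p\<^sup>2)"
      by simp
    also have "\<dots> \<le> (\<Sum>i\<in>{i. set_corr Y i \<le> - p} \<inter> {1..n}. (set_corr Y i)\<^sup>2)"
      using assms power_mono[of p "- set_corr Y _" 2] by (intro sum_mono) auto
    also have "\<dots> \<le> (\<Sum>i=1..n. (set_corr Y i)\<^sup>2)"
      by (intro sum_mono2) auto
    finally show ?thesis .
  qed
  show "\<forall>\<^sub>F n in sequentially. real (card ({i. set_corr Y i \<le> - p} \<inter> {1..n})) / real n
      \<le> ((\<Sum>i=1..n. (set_corr Y i)\<^sup>2) / real n) / p\<^sup>2"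
  proof (intro always_eventually allI)
    fix n
    have "real (card ({i. set_corr Y i \<le> - p} \<inter> {1..n})) / real n * p\<^sup>2
        \<le> (\<Sum>i=1..n. (set_corr Y i)\<^sup>2) / real n"
      using divide_right_mono[OF card_bound[of n], of "real n"] by simp
    then show "real (card ({i. set_corr Y i \<le> - p} \<inter> {1..n})) / real n
        \<le> ((\<Sum>i=1..n. (set_corr Y i)\<^sup>2) / real n) / p\<^sup>2"
      using assms by (subst pos_le_divide_eq) simp_all
  qed
  show "(\<lambda>n. ((\<Sum>i=1..n. (set_corr Y i)\<^sup>2) / real n) / p\<^sup>2) \<longlonglongrightarrow> 0"
    using tendsto_divide[OF set_corr_cesaro tendsto_const, of "p\<^sup>2"] assms by simp
qed simp_all

definition large :: "nat set \<Rightarrow> bool" where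
  "large X \<longleftrightarrow> (\<exists>\<beta>>0. has_mean (indicator X) \<beta>)"

lemma large_UNIV: "large UNIV"
  unfolding large_def using has_mean_const[of 1] by (intro exI[of _ 1]) simp

lemma large_shift:
  assumes "large X" "large Y"
  shows "\<exists>i\<in>X. m < i \<and> large (Y \<inter> {y. y + i \<in> A})"
proof (rule ccontr)
  obtain \<beta> where "0 < \<beta>" and X: "has_mean (indicator X) \<beta>"
    using assms(1) unfolding large_def by blast
  obtain \<gamma> where "0 < \<gamma>" and Y: "has_mean (indicator Y) \<gamma>"
    using assms(2) unfolding large_def by blast
  define bad where "bad = {i. set_corr Y i \<le> - (\<alpha> * \<gamma> / 2)}"
  have "has_mean (indicator bad) 0"
    unfolding bad_def using \<open>0 < \<gamma>\<close> alpha_pos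
    by (intro has_mean_indicator_density_zero negative_set_corr_density_zero) simp
  moreover have "has_mean (indicator {..m}) 0"
    by (intro has_mean_indicator_density_zero density_zero_finite) simp
  ultimately have sum0: "has_mean (\<lambda>x. indicator bad x + indicator {..m} x) 0"
    using has_mean_add by fastforce
  assume no_shift: "\<not> ?thesis"
  have "X \<subseteq> bad \<union> {..m}"
  proof
    fix i assume "i \<in> X"
    show "i \<in> bad \<union> {..m}"
    proof (rule ccontr)
      assume "i \<notin> bad \<union> {..m}"
      then have "0 < set_corr Y i + \<alpha> * \<gamma>" "m < i"
        using mult_pos_pos[OF alpha_pos \<open>0 < \<gamma>\<close>] by (auto simp: bad_def)
      with has_mean_shift_inter[OF Y, of i] \<open>i \<in> X\<close> no_shift show False
        unfolding large_def by blast
    qed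
  qed
  then have "indicator X x \<le> (indicator bad x + indicator {..m} x :: real)" for x
    by (auto simp: indicator_def)
  with has_mean_mono[OF X sum0] \<open>0 < \<beta>\<close> show False
    by simp
qed

end

section \<open>Building the sumset\<close>

locale shift_selection =
  fixes A :: "nat set" and P :: "nat set \<Rightarrow> bool"
  assumes P_UNIV: "P UNIV"
    and P_shift: "\<And>X Y m. P X \<Longrightarrow> P Y \<Longrightarrow> \<exists>i\<in>X. m < i \<and> P (Y \<inter> {y. y + i \<in> A})"
begin

definition pick :: "nat set \<Rightarrow> nat set \<Rightarrow> nat \<Rightarrow> nat" where
  "pick X Y m = (SOME i. i \<in> X \<and> m < i \<and> P (Y \<inter> {y. y + i \<in> A}))"

lemma pick:
  assumes "P X" "P Y"
  shows "pick X Y m \<in> X \<and> m < pick X Y m \<and> P (Y \<inter> {y. y + pick X Y m \<in> A})"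
  unfolding pick_def using P_shift[OF assms, of m] by (rule someI2_bex) blast

text \<open>Stage n holds X_n, Y_n and the last chosen c_(n-1) (initially 0); then b_n is drawn
  from Y_n above c_(n-1), and c_n from X_(n+1) = X_n \<inter> (A - b_n) above b_n.\<close>

primrec stage :: "nat \<Rightarrow> nat set \<times> nat set \<times> nat" where
  "stage 0 = (UNIV, UNIV, 0)"
| "stage (Suc n) = (case stage n of (X, Y, m) \<Rightarrow>
     let b = pick Y X m; X' = X \<inter> {x. x + b \<in> A}; c = pick X' Y b
     in (X', Y \<inter> {y. y + c \<in> A}, c))"

definition Xs :: "nat \<Rightarrow> nat set" where "Xs n = fst (stage n)"
definition Ys :: "nat \<Rightarrow> nat set" where "Ys n = fst (snd (stage n))"
definition bs :: "nat \<Rightarrow> nat" where "bs n = pick (Ys n) (Xs n) (snd (snd (stage n)))"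
definition cs :: "nat \<Rightarrow> nat" where "cs n = snd (snd (stage (Suc n)))"

lemma stage_simps:
  "Xs 0 = UNIV" "Ys 0 = UNIV"
  "Xs (Suc n) = Xs n \<inter> {x. x + bs n \<in> A}"
  "cs n = pick (Xs (Suc n)) (Ys n) (bs n)"
  "Ys (Suc n) = Ys n \<inter> {y. y + cs n \<in> A}"
  "bs (Suc n) = pick (Ys (Suc n)) (Xs (Suc n)) (cs n)"
  by (simp_all add: Xs_def Ys_def bs_def cs_def Let_def split: prod.split)

lemma P_stage: "P (Xs n) \<and> P (Ys n)"
proof (induction n)
  case 0
  show ?case by (simp add: stage_simps P_UNIV)
next
  case (Suc n)
  then have "P (Xs (Suc n))"
    using pick[of "Ys n" "Xs n" "snd (snd (stage n))", folded bs_def] by (simp add: stage_simps)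
  with Suc show ?case
    using pick[of "Xs (Suc n)" "Ys n" "bs n", folded stage_simps(4)] by (simp add: stage_simps(5))
qed

lemma bs_mem: "bs n \<in> Ys n" and bs_pos: "0 < bs n"
  using pick[of "Ys n" "Xs n" "snd (snd (stage n))", folded bs_def] P_stage by auto

lemma cs_mem: "cs n \<in> Xs (Suc n)" and bs_less_cs: "bs n < cs n"
  using pick[of "Xs (Suc n)" "Ys n" "bs n", folded stage_simps(4)] P_stage by auto

lemma cs_less_bs: "cs n < bs (Suc n)"
  using pick[of "Ys (Suc n)" "Xs (Suc n)" "cs n", folded stage_simps(6)] P_stage by auto

lemma Xs_subset: "Xs n \<subseteq> {x. \<forall>k<n. x + bs k \<in> A}"
  by (induction n) (auto simp: stage_simps less_Suc_eq)

lemma Ys_subset: "Ys n \<subseteq> {y. \<forall>k<n. y + cs k \<in> A}"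
  by (induction n) (auto simp: stage_simps less_Suc_eq)

lemma sumset_subset:
  "\<exists>B C :: nat set. B \<subseteq> {1..} \<and> C \<subseteq> {1..} \<and> infinite B \<and> infinite C \<and>
     {b + c | b c. b \<in> B \<and> c \<in> C} \<subseteq> A"
proof (intro exI conjI)
  have "strict_mono bs" "strict_mono cs"
    using bs_less_cs cs_less_bs by (auto intro: strict_mono_Suc_iff[THEN iffD2] less_trans)
  then show "infinite (range bs)" "infinite (range cs)"
    by (simp_all add: range_inj_infinite strict_mono_imp_inj_on)
  have "0 < cs n" for n
    using bs_pos[of n] bs_less_cs[of n] by simp
  with bs_pos show "range bs \<subseteq> {1..}" "range cs \<subseteq> {1..}"
    by (auto simp: Suc_le_eq)
  show "{b + c | b c. b \<in> range bs \<and> c \<in> range cs} \<subseteq> A"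
  proof clarify
    fix i j
    show "bs i + cs j \<in> A"
    proof (cases "i \<le> j")
      case True
      then show ?thesis using Xs_subset[of "Suc j"] cs_mem[of j] by (auto simp: add.commute)
    next
      case False
      then show ?thesis using Ys_subset[of i] bs_mem[of i] by auto
    qed
  qed
qed

end

theorem theorem5p5:
  fixes A :: "nat set"
  assumes "A \<subseteq> {1..}" and "pseudorandom A"
  shows "\<exists>B C :: nat set. B \<subseteq> {1..} \<and> C \<subseteq> {1..} \<and> infinite B \<and> infinite C \<and>
           {b + c | b c. b \<in> B \<and> c \<in> C} \<subseteq> A"
proof -
  obtain \<alpha> U N c where "0 < \<alpha>" "free_ultrafilter U" "filterlim N at_top U"
    "loeb_measure_std U N A \<alpha>" "\<forall>i\<ge>1. loeb_measure_std U N {x \<in> A. x + i \<in> A} (c i)"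
    "(\<lambda>n. (\<Sum>i=1..n. \<bar>c i - \<alpha>\<^sup>2\<bar>) / real n) \<longlonglongrightarrow> 0"
    using assms(2) unfolding pseudorandom_def by blast
  then interpret pseudorandom_set U N A \<alpha> c
    by unfold_locales auto
  interpret shift_selection A large
    by unfold_locales (simp_all add: large_UNIV large_shift)
  show ?thesis
    by (rule sumset_subset)
qed

end
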